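(* Let $n,x$ be integers with $1<x<n$, so that $G=C_{2n}(x,1,n)$ is a $5$-regular circulant graph. If $n\equiv 1\pmod 3$, $x\equiv 2\pmod 3$ and $1<x\leq \tfrac{2n}{3}$, then $G$ is word-representable.
   Context: Two distinct letters $x,y$ alternate in a word $w$ if, after deleting all other letters from $w$, the resulting word is of the form $xyxy\cdots$ or $yxyx\cdots$ (of even or odd length). A graph $G=(V,E)$ is word-representable if there is a word $w$ over the alphabet $V$, containing every letter of $V$ at least once, such that for all distinct $x,y\in V$, $xy\in E$ if and only if $x$ and $y$ alternate in $w$. For an integer $m$ and a set $R$ of positive integers each at most $m/2$, the circulant graph $C_m(R)$ has vertex set $\{0,1,\dots,m-1\}$, with $i$ and $j$ adjacent iff $\min(|i-j|,\,m-|i-j|)\in R$. $C_{2n}(x,1,n)$ denotes the circulant graph on $2n$ vertices with jump set $\{1,x,n\}$; it is $5$-regular exactly when $1<x<n$. *)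

theory Defs
  imports Main
begin

definition alternate :: "'a list \<Rightarrow> 'a \<Rightarrow> 'a \<Rightarrow> bool" where
  "alternate w a b \<longleftrightarrow>
     (let u = filter (\<lambda>c. c = a \<or> c = b) w in
        \<forall>i. Suc i < length u \<longrightarrow> u ! i \<noteq> u ! Suc i)"

definition word_representable :: "'a set \<Rightarrow> ('a \<Rightarrow> 'a \<Rightarrow> bool) \<Rightarrow> bool" where
  "word_representable V E \<longleftrightarrow>
     (\<exists>w. set w = V \<and>
        (\<forall>a\<in>V. \<forall>b\<in>V. a \<noteq> b \<longrightarrow> (E a b \<longleftrightarrow> alternate w a b)))"

definition circ_dist :: "nat \<Rightarrow> nat \<Rightarrow> nat \<Rightarrow> nat" where
  "circ_dist m i j = (let d = (if i \<le> j then j - i else i - j) in min d (m - d))"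

definition circulant_adj :: "nat \<Rightarrow> nat set \<Rightarrow> nat \<Rightarrow> nat \<Rightarrow> bool" where
  "circulant_adj m R i j \<longleftrightarrow> i < m \<and> j < m \<and> circ_dist m i j \<in> R"

end

(* Orient every edge of a graph towards its endpoint of larger rank. If the orientation is
   semi-transitive (every directed path whose ends are joined by an arc spans a transitive
   tournament), the graph is word-representable (Halldorsson, Kitaev and Pyatkin): the word is a
   concatenation of blocks in which every letter occurs twice, every arc u -> v reads u v u v, and
   for each non-adjacent pair one block in which that pair does not alternate.

   For G = C_2n(x,1,n), choose an odd s such that s and s x lie between n/2 and 3n/2 modulo 2n;
   since s is odd, s n = n modulo 2n as well. Ranking each vertex v by the quarter of Z_2n
   containing s v is then a proper 4-colouring, so directed paths have at most three arcs. Along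
   a path a -> b -> c -> d with a ~ d each scaled step lies in (0, n), which fixes the jump between
   consecutive vertices to one of two values +-1, +-x; as the four jumps sum to 0 modulo 2n, the
   conditions modulo 3 leave only four equal jumps of +-x with 4 x = 2 n. Hence a ~ c and b ~ d,
   and the orientation is semi-transitive. *)

theory Submission
  imports Defs "HOL-Number_Theory.Cong"
begin

section \<open>Alternation in timed words\<close>

lemma alternate_iff_distinct_adj:
  "alternate w a b \<longleftrightarrow> distinct_adj (filter (\<lambda>c. c = a \<or> c = b) w)"
  by (simp add: alternate_def distinct_adj_conv_nth Let_def)

lemma alternate_commute: "alternate w a b \<longleftrightarrow> alternate w b a"
  by (simp add: alternate_iff_distinct_adj disj_commute)

lemma distinct_adj_concat_replicate_abab:
  "a \<noteq> b \<Longrightarrow> distinct_adj (concat (replicate k [a, b, a, b]))"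
proof (induction k)
  case (Suc k)
  then show ?case by (cases k) (auto simp: distinct_adj_Cons)
qed simp

definition timed_word :: "'a list \<Rightarrow> nat \<Rightarrow> ('a \<Rightarrow> nat) \<Rightarrow> ('a \<Rightarrow> nat) \<Rightarrow> 'a list" where
  "timed_word L T s f = concat (map (\<lambda>t. filter (\<lambda>v. s v = t \<or> f v = t) L) [0..<T])"

lemma set_timed_word: "(\<And>v. v \<in> set L \<Longrightarrow> s v < T) \<Longrightarrow> set (timed_word L T s f) = set L"
  by (auto simp: timed_word_def) (metis atLeastLessThan_iff zero_le)

lemma filter_eq_singleton:
  "distinct L \<Longrightarrow> a \<in> set L \<Longrightarrow> (\<And>v. v \<in> set L \<Longrightarrow> P v \<longleftrightarrow> v = a) \<Longrightarrow> filter P L = [a]"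
  by (induction L) (auto simp: filter_empty_conv)

lemma filter_timed_word_pair:
  assumes "distinct L" "a \<in> set L" "b \<in> set L" "a \<noteq> b"
    and "s a \<noteq> s b" "s a \<noteq> f b" "f a \<noteq> s b" "f a \<noteq> f b"
  shows "filter (\<lambda>c. c = a \<or> c = b) (timed_word L T s f) =
    map (\<lambda>t. if t = s a \<or> t = f a then a else b)
      (filter (\<lambda>t. t = s a \<or> t = f a \<or> t = s b \<or> t = f b) [0..<T])"
proof -
  have "filter (\<lambda>c. c = a \<or> c = b) (filter (\<lambda>v. s v = t \<or> f v = t) L) =
     (if t = s a \<or> t = f a \<or> t = s b \<or> t = f b then [if t = s a \<or> t = f a then a else b] else [])"
    for t
    using assms by (auto simp: filter_filter filter_empty_conv intro!: filter_eq_singleton)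
  moreover have "concat (map (\<lambda>t. if P t then [g t] else []) ts) = map g (filter P ts)"
    for P g and ts :: "nat list"
    by (induction ts) auto
  ultimately show ?thesis
    by (simp add: timed_word_def filter_concat map_map comp_def)
qed

lemma filter_upt_four:
  assumes "p < q" "q < r" "r < u" "u < T" "\<And>t. P t \<longleftrightarrow> t = p \<or> t = q \<or> t = r \<or> t = u"
  shows "filter P [0..<T] = [p, q, r, u]"
proof (rule sorted_distinct_set_unique)
  show "sorted (filter P [0..<T])" by (rule sorted_wrt_filter) simp
qed (use assms in auto)

lemma timed_word_interleaved:
  assumes "distinct L" "a \<in> set L" "b \<in> set L"
    and "s a < s b" "s b < f a" "f a < f b" "f b < T"
  shows "filter (\<lambda>c. c = a \<or> c = b) (timed_word L T s f) = [a, b, a, b]"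
proof -
  have "filter (\<lambda>t. t = s a \<or> t = f a \<or> t = s b \<or> t = f b) [0..<T] = [s a, s b, f a, f b]"
    using assms by (intro filter_upt_four) auto
  then show ?thesis
    using assms by (subst filter_timed_word_pair) auto
qed

lemma timed_word_not_interleaved:
  assumes "distinct L" "a \<in> set L" "b \<in> set L"
    and "s a < f a \<and> f a < s b \<and> s b < f b \<and> f b < T \<or>
         s a < s b \<and> s b < f b \<and> f b < f a \<and> f a < T"
  shows "\<not> distinct_adj (filter (\<lambda>c. c = a \<or> c = b) (timed_word L T s f))"
  using assms(4)
proof (elim disjE conjE)
  assume "s a < f a" "f a < s b" "s b < f b" "f b < T"
  then have "filter (\<lambda>t. t = s a \<or> t = f a \<or> t = s b \<or> t = f b) [0..<T] = [s a, f a, s b, f b]"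
    by (intro filter_upt_four) auto
  with assms(1-3) \<open>f a < s b\<close> \<open>s a < f a\<close> \<open>s b < f b\<close> show ?thesis
    by (subst filter_timed_word_pair) auto
next
  assume "s a < s b" "s b < f b" "f b < f a" "f a < T"
  then have "filter (\<lambda>t. t = s a \<or> t = f a \<or> t = s b \<or> t = f b) [0..<T] = [s a, s b, f b, f a]"
    by (intro filter_upt_four) auto
  with assms(1-3) \<open>s a < s b\<close> \<open>s b < f b\<close> \<open>f b < f a\<close> show ?thesis
    by (subst filter_timed_word_pair) auto
qed

section \<open>Semi-transitive orientations\<close>

definition ranked_arc :: "('a \<Rightarrow> 'a \<Rightarrow> bool) \<Rightarrow> ('a \<Rightarrow> nat) \<Rightarrow> 'a \<Rightarrow> 'a \<Rightarrow> bool" where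
  "ranked_arc E rank u v \<longleftrightarrow> E u v \<and> rank u < rank v"

lemma ranked_reach_rank_less:
  "(ranked_arc E rank)\<^sup>*\<^sup>* u v \<Longrightarrow> u \<noteq> v \<Longrightarrow> rank u < rank v"
proof (induction rule: rtranclp_induct)
  case (step y z)
  then show ?case by (cases "u = y") (auto simp: ranked_arc_def)
qed simp

lemma ranked_reach_rank_gap:
  assumes "(ranked_arc E rank)\<^sup>*\<^sup>* u v" "u \<noteq> v" "\<not> ranked_arc E rank u v"
  shows "rank u + 2 \<le> rank v"
proof -
  obtain a where ua: "ranked_arc E rank u a" and av: "(ranked_arc E rank)\<^sup>*\<^sup>* a v"
    using assms(1,2) by (cases rule: converse_rtranclpE) auto
  have "a \<noteq> v" using ua assms(3) by blast
  then show ?thesis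
    using ua ranked_reach_rank_less[OF av] by (auto simp: ranked_arc_def)
qed

text \<open>With at most four ranks, a directed path has at most three arcs, so semi-transitivity
  only has to be checked on paths of length three.\<close>
lemma semi_transitive_if_four_ranks:
  fixes E :: "'a \<Rightarrow> 'a \<Rightarrow> bool" and rank :: "'a \<Rightarrow> nat"
  defines "arc \<equiv> ranked_arc E rank"
  assumes rank_le: "\<And>v. rank v \<le> 3"
    and chords: "\<And>a b c d. arc a b \<Longrightarrow> arc b c \<Longrightarrow> arc c d \<Longrightarrow> E a d \<Longrightarrow> E a c \<and> E b d"
    and uw: "arc u w" and ux: "arc\<^sup>*\<^sup>* u x" and xy: "arc\<^sup>*\<^sup>* x y" and yw: "arc\<^sup>*\<^sup>* y w"
    and "x \<noteq> y"
  shows "E x y"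
proof (cases "arc x y")
  case True
  then show ?thesis by (simp add: arc_def ranked_arc_def)
next
  case False
  have gap: "rank p + 2 \<le> rank q" if "arc\<^sup>*\<^sup>* p q" "p \<noteq> q" "\<not> arc p q" for p q
    using ranked_reach_rank_gap[of E rank p q] that unfolding arc_def by simp
  have less: "rank p < rank q" if "arc\<^sup>*\<^sup>* p q" "p \<noteq> q" for p q
    using ranked_reach_rank_less[of E rank p q] that unfolding arc_def by simp
  have rank_arc: "rank p < rank q" if "arc p q" for p q
    using that by (simp add: arc_def ranked_arc_def)
  obtain a where xa: "arc x a" and ay: "arc\<^sup>*\<^sup>* a y"
    using xy \<open>x \<noteq> y\<close> by (cases rule: converse_rtranclpE) auto
  have "a \<noteq> y" using xa False by blast
  have xy_gap: "rank x + 2 \<le> rank y" using gap[OF xy \<open>x \<noteq> y\<close> False] .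
  consider "u = x" "y = w" | "u \<noteq> x" | "u = x" "y \<noteq> w" by blast
  then show ?thesis
  proof cases
    case 1
    then show ?thesis using uw by (simp add: arc_def ranked_arc_def)
  next
    case 2
    have "rank u < rank x" using less[OF ux 2] .
    moreover have "y = w \<or> rank y < rank w" using less[OF yw] by blast
    ultimately have "y = w" using xy_gap rank_le[of w] by linarith
    have "arc u x" using gap[OF ux 2] \<open>rank u < rank x\<close> xy_gap rank_le[of y] by linarith
    moreover have "arc a y"
      using gap[OF ay \<open>a \<noteq> y\<close>] rank_arc[OF xa] \<open>rank u < rank x\<close> rank_le[of y] by linarith
    ultimately show ?thesis using chords[OF _ xa, of u y] uw \<open>y = w\<close> by (simp add: arc_def ranked_arc_def)
  next
    case 3
    have "rank y < rank w" using less[OF yw 3(2)] .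
    then have "arc y w" using gap[OF yw 3(2)] xy_gap rank_le[of w] by linarith
    moreover have "arc a y"
      using gap[OF ay \<open>a \<noteq> y\<close>] rank_arc[OF xa] xy_gap \<open>rank y < rank w\<close> rank_le[of w]
      by linarith
    ultimately show ?thesis using chords[OF xa, of y w] uw 3(1) by (simp add: arc_def ranked_arc_def)
  qed
qed

text \<open>An acyclic orientation is given by a ranking of the vertices: each edge points to its
  endpoint of larger rank (every acyclic orientation arises from a topological numbering).\<close>
locale semi_transitive_ranking =
  fixes vs :: "'a list" and E :: "'a \<Rightarrow> 'a \<Rightarrow> bool" and rank :: "'a \<Rightarrow> nat"
  assumes distinct_vs: "distinct vs"
    and adj_sym: "E a b \<Longrightarrow> E b a"
    and rank_proper: "E a b \<Longrightarrow> rank a \<noteq> rank b"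
    and semi_transitive:
      "ranked_arc E rank u w \<Longrightarrow> (ranked_arc E rank)\<^sup>*\<^sup>* u x \<Longrightarrow> (ranked_arc E rank)\<^sup>*\<^sup>* x y
       \<Longrightarrow> (ranked_arc E rank)\<^sup>*\<^sup>* y w \<Longrightarrow> x \<noteq> y \<Longrightarrow> E x y"
begin

abbreviation arc :: "'a \<Rightarrow> 'a \<Rightarrow> bool" where "arc \<equiv> ranked_arc E rank"
abbreviation reach :: "'a \<Rightarrow> 'a \<Rightarrow> bool" where "reach \<equiv> arc\<^sup>*\<^sup>*"

lemma arc_rank_less: "arc a b \<Longrightarrow> rank a < rank b"
  by (simp add: ranked_arc_def)

lemma arc_adj: "arc a b \<Longrightarrow> E a b"
  by (simp add: ranked_arc_def)

lemma reach_antisym: "reach u v \<Longrightarrow> reach v u \<Longrightarrow> u = v"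
  using ranked_reach_rank_less by (metis less_asym)

lemma arc_reach_trans: "arc u v \<Longrightarrow> reach v w \<Longrightarrow> reach u w"
  by (rule converse_rtranclp_into_rtranclp)

lemma arc_not_reach_back: "arc u v \<Longrightarrow> \<not> reach v u"
  using reach_antisym arc_rank_less by blast

definition bound :: nat where "bound = Suc (Max (rank ` set vs))"

definition horizon :: nat where "horizon = 4 * bound + 4"

lemma rank_less_bound: "v \<in> set vs \<Longrightarrow> rank v < bound"
  by (simp add: bound_def le_imp_less_Suc)

text \<open>A block is a timed word; its start and finish times are chosen so that every arc reads
  u v u v. For a non-adjacent pair with x below y the block reads x x y y: semi-transitivity keeps
  y out of the early starters of x.\<close>
definition early :: "'a \<Rightarrow> 'a set" where
  "early x = {v. \<exists>w. reach v w \<and> (reach w x \<or> (\<exists>u. reach u x \<and> arc u w))}"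

definition lower_start :: "'a \<Rightarrow> 'a \<Rightarrow> nat" where
  "lower_start x v = (if v \<in> early x then rank v else 2 * bound + rank v)"

definition lower_finish :: "'a \<Rightarrow> 'a \<Rightarrow> nat" where
  "lower_finish x v = (if reach v x then bound + rank v else 3 * bound + rank v)"

lemma early_arc_closed: "arc a b \<Longrightarrow> b \<in> early x \<Longrightarrow> a \<in> early x"
  unfolding early_def using arc_reach_trans by blast

lemma lower_schedule_arc:
  assumes ab: "arc a b" and "a \<in> set vs" "b \<in> set vs"
  shows "lower_start x a < lower_start x b \<and> lower_start x b < lower_finish x a
    \<and> lower_finish x a < lower_finish x b"
proof -
  have ranks: "rank a < rank b" "rank a < bound" "rank b < bound"
    using arc_rank_less[OF ab] rank_less_bound assms(2,3) by auto
  have "b \<in> early x" if "reach a x"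
    using ab that unfolding early_def by blast
  then have "lower_start x b < lower_finish x a"
    using ranks by (auto simp: lower_start_def lower_finish_def)
  moreover have "lower_start x a < lower_start x b"
    using early_arc_closed[OF ab] ranks by (auto simp: lower_start_def)
  moreover have "lower_finish x a < lower_finish x b"
    using arc_reach_trans[OF ab, of x] ranks by (auto simp: lower_finish_def)
  ultimately show ?thesis by blast
qed

lemma lower_schedule_separates:
  assumes "reach x y" "x \<noteq> y" "\<not> E x y" "x \<in> set vs" "y \<in> set vs"
  shows "lower_start x x < lower_finish x x \<and> lower_finish x x < lower_start x y
    \<and> lower_start x y < lower_finish x y"
proof -
  have "x \<in> early x" unfolding early_def by blast
  moreover have "y \<notin> early x"
  proof
    assume "y \<in> early x"
    then obtain w where yw: "reach y w" and "reach w x \<or> (\<exists>u. reach u x \<and> arc u w)"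
      unfolding early_def by blast
    then consider "reach w x" | u where "reach u x" "arc u w" by blast
    then show False
    proof cases
      case 1
      then show False using reach_antisym[OF assms(1) rtranclp_trans[OF yw 1]] assms(2) by blast
    next
      case 2
      then show False using semi_transitive[OF 2(2,1) assms(1) yw assms(2)] assms(3) by blast
    qed
  qed
  moreover have "\<not> reach y x" using assms(1,2) reach_antisym by blast
  ultimately show ?thesis
    using rank_less_bound[OF assms(4)] rank_less_bound[OF assms(5)]
    by (simp add: lower_start_def lower_finish_def)
qed

text \<open>For an incomparable non-adjacent pair the block reads x y y x.\<close>
definition cross_low :: "'a \<Rightarrow> 'a \<Rightarrow> 'a set" where
  "cross_low x y = {v. reach v x \<or> (\<exists>u. arc u y \<and> reach v u)}"

definition cross_start :: "'a \<Rightarrow> 'a \<Rightarrow> 'a \<Rightarrow> nat" where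
  "cross_start x y v =
    (if v = x then bound + 1 else if v \<in> cross_low x y then rank v else bound + 2 + rank v)"

definition cross_finish :: "'a \<Rightarrow> 'a \<Rightarrow> 'a \<Rightarrow> nat" where
  "cross_finish x y v = (if v = y then 3 * bound + 2 else 2 * bound + 2 + cross_start x y v)"

lemma cross_low_arc_closed: "arc a b \<Longrightarrow> b \<in> cross_low x y \<Longrightarrow> a \<in> cross_low x y"
  unfolding cross_low_def using arc_reach_trans by blast

context
  fixes x y
  assumes incomparable: "\<not> reach x y" "\<not> reach y x" and nonadj: "\<not> E x y"
begin

lemma not_cross_low_if_arc_from_x: "arc x b \<Longrightarrow> b \<notin> cross_low x y"
proof
  assume xb: "arc x b" and "b \<in> cross_low x y"
  then consider "reach b x" | u where "arc u y" "reach b u"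
    unfolding cross_low_def by blast
  then show False
  proof cases
    case 1
    then show False using arc_not_reach_back[OF xb] by blast
  next
    case (2 u)
    then have "reach b y" by (meson rtranclp.rtrancl_into_rtrancl)
    then show False using arc_reach_trans[OF xb] incomparable(1) by blast
  qed
qed

lemma not_cross_low_if_arc_from_y: "arc y b \<Longrightarrow> b \<notin> cross_low x y"
proof
  assume yb: "arc y b" and "b \<in> cross_low x y"
  then consider "reach b x" | u where "arc u y" "reach b u"
    unfolding cross_low_def by blast
  then show False
  proof cases
    case 1
    then show False using arc_reach_trans[OF yb] incomparable(2) by blast
  next
    case (2 u)
    then show False using arc_not_reach_back[OF 2(1)] arc_reach_trans[OF yb] by blast
  qed
qed

lemma cross_start_arc:
  assumes ab: "arc a b" and "a \<in> set vs" "b \<in> set vs"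
  shows "cross_start x y a < cross_start x y b"
proof -
  have ranks: "rank a < rank b" "rank a < bound" "rank b < bound"
    using arc_rank_less[OF ab] rank_less_bound assms(2,3) by auto
  consider "b = x" | "b \<noteq> x" "b \<in> cross_low x y" | "b \<noteq> x" "b \<notin> cross_low x y" by blast
  then show ?thesis
  proof cases
    case 1
    then have "a \<in> cross_low x y" "a \<noteq> x"
      using ab ranks unfolding cross_low_def by auto
    then show ?thesis using 1 ranks by (simp add: cross_start_def)
  next
    case 2
    then have "a \<noteq> x" using ab not_cross_low_if_arc_from_x by blast
    then show ?thesis using 2 cross_low_arc_closed[OF ab] ranks by (simp add: cross_start_def)
  next
    case 3
    then show ?thesis using ranks by (auto simp: cross_start_def)
  qed
qed

lemma cross_finish_arc:
  assumes ab: "arc a b" and "a \<in> set vs" "b \<in> set vs"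
  shows "cross_finish x y a < cross_finish x y b"
proof -
  have ranks: "rank a < rank b" "rank a < bound" "rank b < bound"
    using arc_rank_less[OF ab] rank_less_bound assms(2,3) by auto
  consider "a = y" | "b = y" | "a \<noteq> y" "b \<noteq> y" by blast
  then show ?thesis
  proof cases
    case 1
    have "b \<noteq> x" using ab 1 nonadj adj_sym arc_adj by blast
    moreover have "b \<notin> cross_low x y" using ab 1 not_cross_low_if_arc_from_y by blast
    moreover have "b \<noteq> y" using 1 ranks by auto
    ultimately show ?thesis using 1 ranks by (simp add: cross_finish_def cross_start_def)
  next
    case 2
    have "a \<in> cross_low x y" using ab 2 unfolding cross_low_def by blast
    moreover have "a \<noteq> x" using ab 2 nonadj arc_adj by blast
    ultimately show ?thesis using 2 ranks by (auto simp: cross_finish_def cross_start_def)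
  next
    case 3
    then show ?thesis using cross_start_arc[OF assms] by (simp add: cross_finish_def)
  qed
qed

lemma cross_schedule_arc:
  assumes "arc a b" "a \<in> set vs" "b \<in> set vs"
  shows "cross_start x y a < cross_start x y b \<and> cross_start x y b < cross_finish x y a
    \<and> cross_finish x y a < cross_finish x y b"
proof -
  have "cross_start x y b < 2 * bound + 2"
    using rank_less_bound[OF assms(3)] by (simp add: cross_start_def)
  then show ?thesis
    using cross_start_arc[OF assms] cross_finish_arc[OF assms] by (auto simp: cross_finish_def)
qed

lemma cross_schedule_separates:
  assumes "y \<in> set vs"
  shows "cross_start x y x < cross_start x y y \<and> cross_start x y y < cross_finish x y y
    \<and> cross_finish x y y < cross_finish x y x"
proof -
  have "x \<noteq> y" using incomparable by blast
  moreover have "y \<notin> cross_low x y"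
    using incomparable arc_not_reach_back unfolding cross_low_def by blast
  ultimately show ?thesis
    using rank_less_bound[OF assms] by (simp add: cross_start_def cross_finish_def)
qed

end


definition pair_schedule :: "'a \<times> 'a \<Rightarrow> ('a \<Rightarrow> nat) \<times> ('a \<Rightarrow> nat)" where
  "pair_schedule = (\<lambda>(x, y).
     if reach x y then (lower_start x, lower_finish x)
     else if reach y x then (lower_start y, lower_finish y)
     else (cross_start x y, cross_finish x y))"

definition schedules :: "(('a \<Rightarrow> nat) \<times> ('a \<Rightarrow> nat)) list" where
  "schedules = (rank, \<lambda>v. bound + rank v) #
     map pair_schedule [(x, y) \<leftarrow> List.product vs vs. x \<noteq> y \<and> \<not> E x y]"

definition word :: "'a list" where
  "word = concat (map (\<lambda>(s, f). timed_word vs horizon s f) schedules)"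

lemma schedule_less_horizon:
  assumes "(s, f) \<in> set schedules" "v \<in> set vs"
  shows "f v < horizon"
proof -
  have "rank v < bound" using rank_less_bound[OF assms(2)] .
  moreover have "cross_start x y v < 2 * bound + 2" for x y
    using \<open>rank v < bound\<close> by (simp add: cross_start_def)
  ultimately show ?thesis
    using assms(1)
    by (auto simp: schedules_def pair_schedule_def horizon_def lower_start_def lower_finish_def
        cross_finish_def split: if_splits)
qed

lemma schedule_arc:
  assumes "(s, f) \<in> set schedules" "arc a b" "a \<in> set vs" "b \<in> set vs"
  shows "s a < s b \<and> s b < f a \<and> f a < f b"
  using assms lower_schedule_arc cross_schedule_arc arc_rank_less rank_less_bound
  by (fastforce simp: schedules_def pair_schedule_def split: if_splits)

lemma filter_word:
  "filter P word = concat (map (\<lambda>(s, f). filter P (timed_word vs horizon s f)) schedules)"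
  by (simp add: word_def filter_concat comp_def split_def)

lemma set_word: "set word = set vs"
proof -
  have "set (timed_word vs horizon rank (\<lambda>v. bound + rank v)) = set vs"
    by (rule set_timed_word) (auto simp: horizon_def dest: rank_less_bound)
  moreover have "set (timed_word vs horizon s f) \<subseteq> set vs" for s f
    by (auto simp: timed_word_def)
  ultimately show ?thesis by (force simp: word_def schedules_def)
qed

lemma alternate_word_if_arc:
  assumes "arc a b" "a \<in> set vs" "b \<in> set vs"
  shows "alternate word a b"
proof -
  have "filter (\<lambda>c. c = a \<or> c = b) (timed_word vs horizon s f) = [a, b, a, b]"
    if "(s, f) \<in> set schedules" for s f
    using schedule_arc[OF that assms] schedule_less_horizon[OF that assms(3)]
    by (intro timed_word_interleaved) (auto simp: distinct_vs assms)
  then have "filter (\<lambda>c. c = a \<or> c = b) word = concat (replicate (length schedules) [a, b, a, b])"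
    unfolding filter_word
    by (auto simp: map_replicate_const[symmetric] intro!: arg_cong[of _ _ concat] map_cong)
  moreover have "a \<noteq> b" using arc_rank_less[OF assms(1)] by blast
  ultimately show ?thesis
    by (simp add: alternate_iff_distinct_adj distinct_adj_concat_replicate_abab)
qed

lemma pair_schedule_in_schedules:
  "x \<noteq> y \<Longrightarrow> \<not> E x y \<Longrightarrow> x \<in> set vs \<Longrightarrow> y \<in> set vs \<Longrightarrow> pair_schedule (x, y) \<in> set schedules"
  by (force simp: schedules_def)

lemma pair_schedule_separates:
  assumes "x \<noteq> y" "\<not> E x y" "x \<in> set vs" "y \<in> set vs" and sf: "pair_schedule (x, y) = (s, f)"
  shows "\<not> distinct_adj (filter (\<lambda>c. c = x \<or> c = y) (timed_word vs horizon s f))"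
proof -
  have "(s, f) \<in> set schedules" using pair_schedule_in_schedules[OF assms(1-4)] sf by simp
  then have fin: "f x < horizon" "f y < horizon"
    using schedule_less_horizon assms(3,4) by blast+
  consider "reach x y" | "\<not> reach x y" "reach y x" | "\<not> reach x y" "\<not> reach y x" by blast
  then show ?thesis
  proof cases
    case 1
    then show ?thesis
      using sf lower_schedule_separates[OF 1 assms(1-4)] fin
      by (intro timed_word_not_interleaved) (auto simp: distinct_vs assms pair_schedule_def)
  next
    case 2
    have "\<not> E y x" using assms(2) adj_sym by blast
    then have "\<not> distinct_adj (filter (\<lambda>c. c = y \<or> c = x) (timed_word vs horizon s f))"
      using sf lower_schedule_separates[OF 2(2) assms(1)[symmetric] _ assms(4,3)] fin 2
      by (intro timed_word_not_interleaved) (auto simp: distinct_vs assms pair_schedule_def)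
    then show ?thesis by (simp add: disj_commute)
  next
    case 3
    then show ?thesis
      using sf cross_schedule_separates[OF 3 assms(2,4)] fin
      by (intro timed_word_not_interleaved) (auto simp: distinct_vs assms pair_schedule_def)
  qed
qed

lemma not_alternate_word_if_nonadjacent:
  assumes "x \<noteq> y" "\<not> E x y" "x \<in> set vs" "y \<in> set vs"
  shows "\<not> alternate word x y"
proof -
  obtain s f where sf: "pair_schedule (x, y) = (s, f)" by fastforce
  then obtain S1 S2 where "schedules = S1 @ (s, f) # S2"
    using pair_schedule_in_schedules[OF assms] by (metis split_list)
  then show ?thesis
    using pair_schedule_separates[OF assms sf]
    by (auto simp: alternate_iff_distinct_adj filter_word)
qed

theorem word_representable_graph: "word_representable (set vs) E"
  unfolding word_representable_def
proof (intro exI conjI ballI impI)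
  show "set word = set vs" by (rule set_word)
  fix a b assume ab: "a \<in> set vs" "b \<in> set vs" "a \<noteq> b"
  show "E a b \<longleftrightarrow> alternate word a b"
  proof
    assume "E a b"
    then consider "arc a b" | "arc b a"
      using rank_proper adj_sym by (force simp: ranked_arc_def)
    then show "alternate word a b"
      using alternate_word_if_arc ab alternate_commute by metis
  qed (use not_alternate_word_if_nonadjacent ab in blast)
qed

end

section \<open>The circulant graphs C_2n(x,1,n)\<close>

lemma cong_int_eq_if_abs_diff_less:
  fixes x y m :: int
  assumes "[x = y] (mod m)" "\<bar>x - y\<bar> < m"
  shows "x = y"
proof (rule ccontr)
  assume "x \<noteq> y"
  then have "\<bar>m\<bar> \<le> \<bar>x - y\<bar>"
    using assms(1) by (intro dvd_imp_le_int) (auto simp: cong_iff_dvd_diff)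
  with assms(2) show False by linarith
qed

lemma circ_dist_commute: "circ_dist m a b = circ_dist m b a"
  by (simp add: circ_dist_def Let_def)

lemma circulant_adj_sym: "circulant_adj m R a b \<Longrightarrow> circulant_adj m R b a"
  by (auto simp: circulant_adj_def circ_dist_commute)

lemma circulant_adj_cong:
  assumes "circulant_adj m R a b"
  shows "\<exists>d\<in>R. \<exists>\<sigma>\<in>{1, -1}. [int b = int a + \<sigma> * int d] (mod int m)"
proof -
  let ?d = "circ_dist m a b"
  have "int b - int a \<in> {int ?d, - int ?d, int ?d - int m, int m - int ?d}"
    using assms by (auto simp: circulant_adj_def circ_dist_def Let_def min_def of_nat_diff)
  then have "int b - (int a + int ?d) \<in> {0, - int m} \<or> int b - (int a - int ?d) \<in> {0, int m}"
    by auto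
  then have "[int b = int a + int ?d] (mod int m) \<or> [int b = int a - int ?d] (mod int m)"
    by (auto simp: cong_iff_dvd_diff)
  then show ?thesis using assms by (auto simp: circulant_adj_def)
qed

lemma circulant_adj_if_cong_half:
  assumes "a < 2 * n" "b < 2 * n" "n \<in> R" "[int b = int a + int n] (mod int (2 * n))"
  shows "circulant_adj (2 * n) R a b"
proof -
  have "int b - int a = int n \<or> int b - int a = - int n"
  proof (cases "int a \<le> int b")
    case True
    then show ?thesis
      using assms by (intro disjI1 cong_int_eq_if_abs_diff_less[where m = "int (2 * n)"])
        (auto simp: cong_iff_dvd_diff algebra_simps)
  next
    case False
    have "[int b - int a = int n] (mod int (2 * n))"
      using assms(4) by (simp add: cong_iff_dvd_diff algebra_simps)
    moreover have "[int n = - int n] (mod int (2 * n))"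
      by (simp add: cong_iff_dvd_diff)
    ultimately have "[int b - int a = - int n] (mod int (2 * n))"
      by (rule cong_trans)
    then show ?thesis
      using assms False by (intro disjI2 cong_int_eq_if_abs_diff_less[where m = "int (2 * n)"])
        (auto simp: cong_iff_dvd_diff algebra_simps)
  qed
  then have "circ_dist (2 * n) a b = n" by (auto simp: circ_dist_def Let_def)
  then show ?thesis using assms by (simp add: circulant_adj_def)
qed

lemma cong_scaled_mod:
  fixes m s a b d :: nat and \<sigma> :: int
  assumes "[int b = int a + \<sigma> * int d] (mod int m)"
  shows "[int (s * b mod m) = int (s * a mod m) + \<sigma> * int (s * d mod m)] (mod int m)"
proof -
  have mod_scaled: "[int (s * v mod m) = int s * int v] (mod int m)" for v
    by (simp add: cong_def of_nat_mod)
  have "[int (s * b mod m) = int s * int b] (mod int m)"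
    by (rule mod_scaled)
  also have "[int s * int b = int s * int a + \<sigma> * (int s * int d)] (mod int m)"
    using cong_scalar_left[OF assms, of "int s"] by (simp add: algebra_simps)
  also have "[int s * int a + \<sigma> * (int s * int d) =
      int (s * a mod m) + \<sigma> * int (s * d mod m)] (mod int m)"
    by (intro cong_add cong_scalar_left cong_sym[OF mod_scaled])
  finally show ?thesis .
qed

definition scaled_colour :: "nat \<Rightarrow> nat \<Rightarrow> nat \<Rightarrow> nat" where
  "scaled_colour n s v = 2 * (s * v mod (2 * n)) div n"

definition scales_to_middle :: "nat \<Rightarrow> nat \<Rightarrow> nat \<Rightarrow> bool" where
  "scales_to_middle n s d \<longleftrightarrow> n \<le> 2 * (s * d mod (2 * n)) \<and> 2 * (s * d mod (2 * n)) \<le> 3 * n"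

lemma scaled_colour_le: "0 < n \<Longrightarrow> scaled_colour n s v \<le> 3"
proof -
  assume "0 < n"
  then have "2 * (s * v mod (2 * n)) < 4 * n" by simp
  with \<open>0 < n\<close> show ?thesis
    by (simp add: scaled_colour_def div_less_iff_less_mult less_Suc_eq_le[symmetric])
qed

lemma scaled_colour_bounds:
  assumes "0 < n"
  shows "int (scaled_colour n s v) * int n \<le> 2 * int (s * v mod (2 * n))"
    and "2 * int (s * v mod (2 * n)) < int (scaled_colour n s v) * int n + int n"
proof -
  let ?p = "2 * (s * v mod (2 * n))"
  have "scaled_colour n s v * n \<le> ?p" "?p < scaled_colour n s v * n + n"
    unfolding scaled_colour_def using dividend_less_div_times[OF assms, of ?p] by simp_all
  then have "int (scaled_colour n s v * n) \<le> int ?p" "int ?p < int (scaled_colour n s v * n + n)"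
    by (simp_all only: of_nat_le_iff of_nat_less_iff)
  then show "int (scaled_colour n s v) * int n \<le> 2 * int (s * v mod (2 * n))"
    and "2 * int (s * v mod (2 * n)) < int (scaled_colour n s v) * int n + int n"
    by simp_all
qed

lemma odd_mult_half_mod:
  fixes s n :: nat
  assumes "odd s"
  shows "s * n mod (2 * n) = n"
proof -
  obtain k where "s = 2 * k + 1" using assms by (rule oddE)
  then have "s * n = n + k * (2 * n)" by (simp add: algebra_simps)
  then show ?thesis by (cases "n = 0") simp_all
qed

lemma scales_to_middle_half: "odd s \<Longrightarrow> scales_to_middle n s n"
  by (simp add: scales_to_middle_def odd_mult_half_mod)

lemma scaled_colour_proper:
  assumes "0 < n" "\<forall>d\<in>R. scales_to_middle n s d" "circulant_adj (2 * n) R a b"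
  shows "scaled_colour n s a \<noteq> scaled_colour n s b"
proof
  assume same: "scaled_colour n s a = scaled_colour n s b"
  define P where "P v = int (s * v mod (2 * n))" for v
  obtain d \<sigma> where d: "d \<in> R" "\<sigma> = 1 \<or> \<sigma> = -1"
    and b: "[int b = int a + \<sigma> * int d] (mod int (2 * n))"
    using circulant_adj_cong[OF assms(3)] by blast
  have cong: "[P b = P a + \<sigma> * P d] (mod int (2 * n))"
    unfolding P_def by (rule cong_scaled_mod[OF b])
  have "int n \<le> 2 * P d" and "2 * P d \<le> 3 * int n"
    using assms(2) d(1) by (auto simp: scales_to_middle_def P_def)
  moreover have "\<bar>2 * P b - 2 * P a\<bar> < int n"
    using scaled_colour_bounds[OF assms(1), of s a, unfolded same]
      scaled_colour_bounds[OF assms(1), of s b]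
    unfolding P_def by linarith
  ultimately have "P b = P a + \<sigma> * P d"
    using d(2) by (intro cong_int_eq_if_abs_diff_less[OF cong]) auto
  with \<open>int n \<le> 2 * P d\<close> \<open>\<bar>2 * P b - 2 * P a\<bar> < int n\<close> d(2) show False
    by auto
qed

definition forward_jump :: "nat \<Rightarrow> nat \<Rightarrow> nat \<Rightarrow> int" where
  "forward_jump n s d = (if s * d mod (2 * n) < n then int d else - int d)"

lemma forward_step:
  assumes "\<forall>d\<in>R. scales_to_middle n s d" "circulant_adj (2 * n) R a b"
    and pos: "[int (s * b mod (2 * n)) = int (s * a mod (2 * n)) + \<delta>] (mod int (2 * n))"
    and "0 < \<delta>" "\<delta> < int n"
  shows "\<exists>d\<in>R. s * d mod (2 * n) \<noteq> n \<and> [int b = int a + forward_jump n s d] (mod int (2 * n))"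
proof -
  obtain d \<sigma> where d: "d \<in> R" "\<sigma> = 1 \<or> \<sigma> = -1"
    and b: "[int b = int a + \<sigma> * int d] (mod int (2 * n))"
    using circulant_adj_cong[OF assms(2)] by blast
  define A where "A = int (s * d mod (2 * n))"
  have A: "int n \<le> 2 * A" "2 * A \<le> 3 * int n"
    using assms(1) d(1) by (auto simp: scales_to_middle_def A_def)
  have "[int (s * a mod (2 * n)) + \<delta> = int (s * a mod (2 * n)) + \<sigma> * A] (mod int (2 * n))"
    using cong_trans[OF cong_sym[OF pos] cong_scaled_mod[OF b]] unfolding A_def .
  then have \<delta>: "[\<delta> = \<sigma> * A] (mod int (2 * n))"
    by (simp add: cong_add_lcancel)
  show ?thesis
  proof (cases "\<sigma> = 1")
    case True
    then have "\<delta> = A"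
      using \<delta> A assms(4,5) by (intro cong_int_eq_if_abs_diff_less[where m = "int (2 * n)"]) auto
    then show ?thesis
      using d(1) b True assms(5) by (intro bexI[OF _ d(1)]) (auto simp: forward_jump_def A_def)
  next
    case False
    then have "\<sigma> = -1" using d(2) by blast
    have "[\<delta> = 2 * int n - A] (mod int (2 * n))"
      using \<delta> \<open>\<sigma> = -1\<close> by (simp add: cong_iff_dvd_diff algebra_simps)
    then have "\<delta> = 2 * int n - A"
      using A assms(4,5) by (intro cong_int_eq_if_abs_diff_less[where m = "int (2 * n)"]) auto
    then show ?thesis
      using d(1) b \<open>\<sigma> = -1\<close> assms(5) by (intro bexI[OF _ d(1)]) (auto simp: forward_jump_def A_def)
  qed
qed

text \<open>The conditions modulo 3 exclude every mixture of the two jumps u and w.\<close>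
lemma four_jumps_sum_zero:
  fixes n x u w D1 D2 D3 D4 :: int
  assumes "1 < x" "3 * x \<le> 2 * n" "n mod 3 = 1" "x mod 3 = 2"
    and "u = 1 \<or> u = -1" "w = x \<or> w = -x"
    and "D1 = u \<or> D1 = w" "D2 = u \<or> D2 = w" "D3 = u \<or> D3 = w" "D4 = u \<or> D4 = w"
    and "[D1 + D2 + D3 + D4 = 0] (mod 2 * n)"
  shows "D1 = w \<and> D2 = w \<and> D3 = w \<and> D4 = w \<and> 2 * x = n"
proof -
  obtain k where k: "D1 + D2 + D3 + D4 = 2 * n * k"
    using assms(11) by (auto simp: cong_0_iff elim: dvdE)
  have "\<bar>D1\<bar> \<le> x" "\<bar>D2\<bar> \<le> x" "\<bar>D3\<bar> \<le> x" "\<bar>D4\<bar> \<le> x"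
    using assms(1,5-10) by auto
  then have "\<bar>D1 + D2 + D3 + D4\<bar> < 2 * n * 2"
    using assms(1,2) by linarith
  then have "\<bar>k\<bar> < 2"
    using assms(1,2) by (simp add: k abs_mult)
  then have "k = -1 \<or> k = 0 \<or> k = 1"
    by auto
  then have sum: "D1 + D2 + D3 + D4 = - 2 * n \<or> D1 + D2 + D3 + D4 = 0 \<or> D1 + D2 + D3 + D4 = 2 * n"
    using k by auto
  have "4 \<le> n" "x \<noteq> 3" "3 * x + 1 \<noteq> 2 * n"
    using assms(1-4) by presburger+
  then show ?thesis
    using assms(5-10) sum by (elim disjE; use assms(1,2) in linarith)
qed

locale circulant_multiplier =
  fixes n x s :: nat
  assumes x_gt_1: "1 < x" and x_le: "3 * x \<le> 2 * n"
    and n_mod_3: "n mod 3 = 1" and x_mod_3: "x mod 3 = 2"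
    and odd_s: "odd s" and middle_1: "scales_to_middle n s 1" and middle_x: "scales_to_middle n s x"
begin

abbreviation adj :: "nat \<Rightarrow> nat \<Rightarrow> bool" where "adj \<equiv> circulant_adj (2 * n) {1, x, n}"
abbreviation colour :: "nat \<Rightarrow> nat" where "colour \<equiv> scaled_colour n s"
abbreviation arc :: "nat \<Rightarrow> nat \<Rightarrow> bool" where "arc \<equiv> ranked_arc adj colour"
abbreviation pos :: "nat \<Rightarrow> int" where "pos v \<equiv> int (s * v mod (2 * n))"

lemma n_pos: "0 < n"
  using x_gt_1 x_le by simp

lemma middle_jumps: "\<forall>d\<in>{1, x, n}. scales_to_middle n s d"
  using middle_1 middle_x scales_to_middle_half[OF odd_s] by auto

lemma colour_le_3: "colour v \<le> 3"
  by (rule scaled_colour_le[OF n_pos])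

lemma adj_forward_step:
  assumes "adj p q" "[pos q = pos p + \<delta>] (mod int (2 * n))" "0 < \<delta>" "\<delta> < int n"
  shows "\<exists>D\<in>{forward_jump n s 1, forward_jump n s x}. [int q = int p + D] (mod int (2 * n))"
  using forward_step[OF middle_jumps assms] odd_mult_half_mod[OF odd_s] by auto

lemma rainbow_path_jumps:
  assumes ab: "arc a b" and bc: "arc b c" and cd: "arc c d" and "adj a d"
  shows "2 * x = n \<and> (\<exists>w. (w = int x \<or> w = - int x) \<and> [int b = int a + w] (mod int (2 * n))
    \<and> [int c = int b + w] (mod int (2 * n)) \<and> [int d = int c + w] (mod int (2 * n)))"
proof -
  let ?N = "int (2 * n)"
  define u where "u = forward_jump n s 1"
  define w where "w = forward_jump n s x"
  have "colour a = 0" "colour b = 1" "colour c = 2" "colour d = 3"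
    using ab bc cd colour_le_3[of d] by (auto simp: ranked_arc_def)
  then have bounds: "2 * pos a < int n" "int n \<le> 2 * pos b" "2 * pos b < 2 * int n"
    "2 * int n \<le> 2 * pos c" "2 * pos c < 3 * int n" "3 * int n \<le> 2 * pos d"
    using scaled_colour_bounds[OF n_pos, of s a] scaled_colour_bounds[OF n_pos, of s b]
      scaled_colour_bounds[OF n_pos, of s c] scaled_colour_bounds[OF n_pos, of s d]
    by simp_all
  have "s * d mod (2 * n) < 2 * n"
    using n_pos by simp
  then have "0 \<le> pos a" "pos d < 2 * int n"
    by linarith+
  obtain D1 where D1: "D1 = u \<or> D1 = w" "[int b = int a + D1] (mod ?N)"
    using adj_forward_step[of a b "pos b - pos a"] ab bounds \<open>0 \<le> pos a\<close>
    by (auto simp: ranked_arc_def u_def w_def)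
  obtain D2 where D2: "D2 = u \<or> D2 = w" "[int c = int b + D2] (mod ?N)"
    using adj_forward_step[of b c "pos c - pos b"] bc bounds
    by (auto simp: ranked_arc_def u_def w_def)
  obtain D3 where D3: "D3 = u \<or> D3 = w" "[int d = int c + D3] (mod ?N)"
    using adj_forward_step[of c d "pos d - pos c"] cd bounds \<open>pos d < 2 * int n\<close>
    by (auto simp: ranked_arc_def u_def w_def)
  have "[pos a = pos d + (pos a + ?N - pos d)] (mod ?N)"
    by (simp add: cong_iff_dvd_diff)
  then obtain D4 where D4: "D4 = u \<or> D4 = w" "[int a = int d + D4] (mod ?N)"
    using adj_forward_step[of d a "pos a + ?N - pos d"] circulant_adj_sym[OF \<open>adj a d\<close>] bounds
      \<open>0 \<le> pos a\<close> \<open>pos d < 2 * int n\<close>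
    by (auto simp: u_def w_def)
  have "?N dvd (int b - (int a + D1)) + (int c - (int b + D2)) + (int d - (int c + D3))
      + (int a - (int d + D4))"
    using D1(2) D2(2) D3(2) D4(2) by (intro dvd_add) (simp_all add: cong_iff_dvd_diff)
  also have "\<dots> = - (D1 + D2 + D3 + D4)"
    by simp
  finally have sum: "[D1 + D2 + D3 + D4 = 0] (mod 2 * int n)"
    by (simp only: cong_0_iff dvd_minus_iff of_nat_mult of_nat_numeral)
  have "1 < int x" "3 * int x \<le> 2 * int n" "int n mod 3 = 1" "int x mod 3 = 2"
    using x_gt_1 x_le n_mod_3 x_mod_3 by presburger+
  moreover have "u = 1 \<or> u = -1" "w = int x \<or> w = - int x"
    by (simp_all add: u_def w_def forward_jump_def)
  ultimately have "D1 = w \<and> D2 = w \<and> D3 = w \<and> D4 = w \<and> 2 * int x = int n"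
    using D1(1) D2(1) D3(1) D4(1) sum by (rule four_jumps_sum_zero)
  then show ?thesis
    using D1(2) D2(2) D3(2) \<open>w = int x \<or> w = - int x\<close> by auto
qed

lemma rainbow_path_chords:
  assumes "arc a b" "arc b c" "arc c d" "adj a d"
  shows "adj a c \<and> adj b d"
proof -
  obtain w where w: "w = int x \<or> w = - int x" and "2 * x = n"
    and ab: "[int b = int a + w] (mod int (2 * n))" and bc: "[int c = int b + w] (mod int (2 * n))"
    and cd: "[int d = int c + w] (mod int (2 * n))"
    using rainbow_path_jumps[OF assms] by blast
  have two_jumps: "[int q = int p + int n] (mod int (2 * n))"
    if "[int q = int r + w] (mod int (2 * n))" "[int r = int p + w] (mod int (2 * n))" for p q r
  proof -
    have "[int q = int p + 2 * w] (mod int (2 * n))"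
      using cong_trans[OF that(1) cong_add[OF that(2) cong_refl[of w]]] by (simp add: algebra_simps)
    moreover have "[int p + 2 * w = int p + int n] (mod int (2 * n))"
      using w \<open>2 * x = n\<close> by (auto simp: cong_iff_dvd_diff)
    ultimately show ?thesis by (rule cong_trans)
  qed
  have "a < 2 * n" "b < 2 * n" "c < 2 * n" "d < 2 * n"
    using assms(1-3) by (auto simp: ranked_arc_def circulant_adj_def)
  then show ?thesis
    using two_jumps[OF bc ab] two_jumps[OF cd bc] by (auto intro: circulant_adj_if_cong_half)
qed

lemma colour_semi_transitive_ranking: "semi_transitive_ranking [0..<2 * n] adj colour"
proof
  show "adj b a" if "adj a b" for a b
    using that by (rule circulant_adj_sym)
  show "colour a \<noteq> colour b" if "adj a b" for a b
    by (rule scaled_colour_proper[OF n_pos middle_jumps that])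
  show "adj p q" if "arc u w" "arc\<^sup>*\<^sup>* u p" "arc\<^sup>*\<^sup>* p q" "arc\<^sup>*\<^sup>* q w" "p \<noteq> q" for u w p q
    using semi_transitive_if_four_ranks[OF colour_le_3 rainbow_path_chords that] .
qed simp

end

text \<open>Writing n = 3 a + 1 and x = 3 k + 2, the product s x reduces to 4 a + k + 2 for s = 2 a + 1
  and to 7 k + 4 - 2 a for s = 2 a + 3.\<close>
lemma exists_odd_multiplier_to_middle:
  fixes n x :: nat
  assumes "3 * x \<le> 2 * n" "n mod 3 = 1" "x mod 3 = 2"
  obtains s where "odd s" "scales_to_middle n s 1" "scales_to_middle n s x"
proof -
  define a where "a = n div 3"
  define k where "k = x div 3"
  have n: "n = 3 * a + 1" using assms(2) unfolding a_def by presburger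
  have x: "x = 3 * k + 2" using assms(3) unfolding k_def by presburger
  have bound: "9 * k + 4 \<le> 6 * a" using assms(1) n x by linarith
  show ?thesis
  proof (cases "2 * k + 1 \<le> a")
    case True
    define s where "s = 2 * a + 1"
    have "s * x = (4 * a + k + 2) + k * (2 * n)" unfolding s_def n x by (simp add: algebra_simps)
    then have "s * x mod (2 * n) = (4 * a + k + 2) mod (2 * n)" by (simp only: mod_mult_self1)
    also have "\<dots> = 4 * a + k + 2" using True n by simp
    finally have "s * x mod (2 * n) = 4 * a + k + 2" .
    moreover have "s mod (2 * n) = s" using n by (simp add: s_def)
    ultimately show ?thesis
      using True n by (intro that[of s]) (auto simp: s_def scales_to_middle_def)
  next
    case False
    define s where "s = 2 * a + 3"
    have "s * x = (7 * k + 4 - 2 * a) + (k + 1) * (2 * n)"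
      using False unfolding s_def n x by (simp add: algebra_simps)
    then have "s * x mod (2 * n) = (7 * k + 4 - 2 * a) mod (2 * n)" by (simp only: mod_mult_self1)
    also have "\<dots> = 7 * k + 4 - 2 * a" using bound n by simp
    finally have "s * x mod (2 * n) = 7 * k + 4 - 2 * a" .
    moreover have "s mod (2 * n) = s" using n bound by (simp add: s_def)
    ultimately show ?thesis
      using False n bound by (intro that[of s]) (auto simp: s_def scales_to_middle_def)
  qed
qed

theorem corollary7:
  fixes n x :: nat
  assumes "1 < x" and "x < n"
    and "n mod 3 = 1" and "x mod 3 = 2"
    and "3 * x \<le> 2 * n"
  shows "word_representable {0..<2*n} (circulant_adj (2*n) {1, x, n})"
proof -
  obtain s where s: "odd s" "scales_to_middle n s 1" "scales_to_middle n s x"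
    using exists_odd_multiplier_to_middle[OF assms(5,3,4)] by blast
  have "circulant_multiplier n x s"
    using assms s by unfold_locales
  then have "semi_transitive_ranking [0..<2*n] (circulant_adj (2*n) {1, x, n}) (scaled_colour n s)"
    by (rule circulant_multiplier.colour_semi_transitive_ranking)
  then have "word_representable (set [0..<2*n]) (circulant_adj (2*n) {1, x, n})"
    by (rule semi_transitive_ranking.word_representable_graph)
  then show ?thesis by simp
qed

end
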